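(* Let $\mathcal{Q}=[0,1]^{\mathbb{N}}$. Let $\cong_{\mathrm{perm}}$ be the equivalence relation on $K(\mathcal{Q})^{\mathbb{N}}$ given by $\vec A\cong_{\mathrm{perm}}\vec B$ iff there are a homeomorphism $f:\mathcal{Q}\to\mathcal{Q}$ and a permutation $\sigma$ of $\mathbb{N}$ with $f[A_n]=B_{\sigma(n)}$ for all $n$. Let $\cong_{(1,1)}$ be the equivalence relation on the space of triples $(X,B,A)$ of compact metric spaces (compact subsets of $\mathcal{Q}$) with $X$ perfect and $A\subseteq B\subseteq X$, given by $(X,B,A)\cong_{(1,1)}(Y,D,C)$ iff there is a homeomorphism $f:X\to Y$ with $f[A]=C$ and $f[B]=D$. Then $\cong_{\mathrm{perm}}\ \leqslant_B\ \cong_{(1,1)}$.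
   Context: $K(\mathcal{Q})$ is the space of compact subsets of the Hilbert cube with the Vietoris topology. A space is perfect if it has no isolated points. For equivalence relations $\mathsf{E}$ on $X$ and $\mathsf{F}$ on $Y$ (standard Borel/Polish spaces), $\mathsf{E}\leqslant_B\mathsf{F}$ means there is a Borel map $f:X\to Y$ with $x\,\mathsf{E}\,y\iff f(x)\,\mathsf{F}\,f(y)$ for all $x,y$. *)

theory Defs
  imports "HOL-Analysis.Analysis"
begin

text \<open>The Hilbert cube Q = [0,1]^N, as a subset of nat \<Rightarrow> real, which carries the
  product topology (library instance for function spaces).\<close>
definition hilbert_cube :: "(nat \<Rightarrow> real) set" where
  "hilbert_cube = {x. \<forall>n. x n \<in> {0..1}}"

text \<open>K(Q): the compact subsets of Q (including the empty set, Kechris' convention).\<close>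
definition KQ :: "(nat \<Rightarrow> real) set set" where
  "KQ = {K. compact K \<and> K \<subseteq> hilbert_cube}"

definition vietoris_KQ :: "(nat \<Rightarrow> real) set topology" where
  "vietoris_KQ = topology_generated_by
     ({{K \<in> KQ. K \<subseteq> U} | U. open U} \<union> {{K \<in> KQ. K \<inter> U \<noteq> {}} | U. open U})"

definition borel_of_top :: "'a topology \<Rightarrow> 'a measure" where
  "borel_of_top T = sigma (topspace T) {U. openin T U}"

definition KQ_borel :: "(nat \<Rightarrow> real) set measure" where
  "KQ_borel = borel_of_top vietoris_KQ"

definition KQ_seq_borel :: "(nat \<Rightarrow> (nat \<Rightarrow> real) set) measure" where
  "KQ_seq_borel = PiM UNIV (\<lambda>_. KQ_borel)"

definition perfect_set :: "'a::topological_space set \<Rightarrow> bool" where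
  "perfect_set X \<longleftrightarrow> (\<forall>x\<in>X. x islimpt X)"

text \<open>Triples (X,B,A) of compact subsets of Q with X perfect and A \<subseteq> B \<subseteq> X,
  encoded as (X,(B,A)).\<close>
definition triples :: "((nat \<Rightarrow> real) set \<times> (nat \<Rightarrow> real) set \<times> (nat \<Rightarrow> real) set) set" where
  "triples = {(X, B, A). X \<in> KQ \<and> B \<in> KQ \<and> A \<in> KQ \<and> perfect_set X \<and> A \<subseteq> B \<and> B \<subseteq> X}"

definition triples_borel :: "((nat \<Rightarrow> real) set \<times> (nat \<Rightarrow> real) set \<times> (nat \<Rightarrow> real) set) measure" where
  "triples_borel = restrict_space (KQ_borel \<Otimes>\<^sub>M (KQ_borel \<Otimes>\<^sub>M KQ_borel)) triples"

definition perm_equiv :: "(nat \<Rightarrow> (nat \<Rightarrow> real) set) \<Rightarrow> (nat \<Rightarrow> (nat \<Rightarrow> real) set) \<Rightarrow> bool" where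
  "perm_equiv A B \<longleftrightarrow> (\<exists>f g \<sigma>. homeomorphism hilbert_cube hilbert_cube f g \<and> bij (\<sigma> :: nat \<Rightarrow> nat)
      \<and> (\<forall>n. f ` A n = B (\<sigma> n)))"

definition equiv_11 :: "((nat \<Rightarrow> real) set \<times> (nat \<Rightarrow> real) set \<times> (nat \<Rightarrow> real) set)
     \<Rightarrow> ((nat \<Rightarrow> real) set \<times> (nat \<Rightarrow> real) set \<times> (nat \<Rightarrow> real) set) \<Rightarrow> bool" where
  "equiv_11 t s \<longleftrightarrow> (case t of (X, B, A) \<Rightarrow> case s of (Y, D, C) \<Rightarrow>
      (\<exists>f g. homeomorphism X Y f g \<and> f ` A = C \<and> f ` B = D))"

definition borel_reducible :: "'a measure \<Rightarrow> ('a \<Rightarrow> 'a \<Rightarrow> bool) \<Rightarrow> 'b measure \<Rightarrow> ('b \<Rightarrow> 'b \<Rightarrow> bool) \<Rightarrow> bool" where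
  "borel_reducible M E N F \<longleftrightarrow> (\<exists>f \<in> measurable M N.
      \<forall>x\<in>space M. \<forall>y\<in>space M. E x y \<longleftrightarrow> F (f x) (f y))"

end

theory Submission
  imports Defs
begin

(* Interleaving coordinates identifies Q with Q x Q; write its points as (e, q) with a
   "height" e and a "base point" q, and let e_n be the n-th unit vector.  To a sequence A
   of compact sets associate the hedgehog X_A: the spine {0} x Q, and for every n the hair
   {t e_n | 0 < t < 1} x A_n ending in the cube {e_n} x Q (hair n t q is the point
   (t e_n, q)).  X_A is compact and perfect, and A |-> (X_A, X_A, spine) is Borel.
   A homeomorphism f of Q with f[A_n] = A'_(sigma n) induces the homeomorphism
   (e, q) |-> (e o inv sigma, f q) of X_A onto X_A' fixing the spine.  Conversely, a
   homeomorphism fixing the spine permutes the bristles {e_n > 0}, which are connected,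
   pairwise disjoint and relatively open in X_A - spine; its restriction to the spine is a
   homeomorphism of Q, and since the closure of the n-th bristle meets the spine exactly in
   {0} x A_n, it maps A_n onto A'_(sigma n) for the induced permutation sigma. *)

lemma closed_Collect_continuous_mem:
  "closed S \<Longrightarrow> continuous_on UNIV f \<Longrightarrow> closed {x. f x \<in> S}"
  using closed_vimage[of S f] by (simp add: vimage_def)

lemma islimpt_injective_image:
  assumes "continuous_on UNIV f" "inj f" "a islimpt S"
  shows "f a islimpt f ` S"
proof (rule islimptI)
  fix T assume "f a \<in> T" "open T"
  then have "open (f -` T)" "a \<in> f -` T"
    using open_vimage[OF _ assms(1)] by auto
  then obtain y where "y \<in> S" "y \<in> f -` T" "y \<noteq> a"
    using assms(3) by (meson islimptE)
  then show "\<exists>y\<in>f ` S. y \<in> T \<and> y \<noteq> f a"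
    using assms(2) by (metis image_eqI injD vimageE)
qed

lemma homeomorphism_inj_on: "homeomorphism S T f g \<Longrightarrow> inj_on f S"
  by (rule inj_on_inverseI[where A = S and f = f and g = g]) (rule homeomorphism_apply1)

lemma homeomorphism_image_Diff:
  assumes "homeomorphism S T f g" "B \<subseteq> S"
  shows "f ` (S - B) = T - f ` B"
  using inj_on_image_set_diff[OF homeomorphism_inj_on[OF assms(1)] Diff_subset assms(2)]
    homeomorphism_image1[OF assms(1)] by simp

lemma homeomorphism_image_image:
  assumes "homeomorphism S T f g" "B \<subseteq> S"
  shows "g ` f ` B = B"
  using assms homeomorphism_apply1[OF assms(1)] by (force simp: image_iff)

lemma homeomorphism_image_closure:
  assumes hom: "homeomorphism S T f g" and "closed S" "closed T" "B \<subseteq> S"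
  shows "f ` closure B = closure (f ` B)"
proof
  have "closure B \<subseteq> S" using assms closure_minimal by blast
  then show "f ` closure B \<subseteq> closure (f ` B)"
    by (rule continuous_image_closure_subset[OF homeomorphism_cont1[OF hom]])
  have "f ` B \<subseteq> T" using hom assms(4) homeomorphism_image1 by blast
  then have T: "closure (f ` B) \<subseteq> T" using assms(3) closure_minimal by blast
  have "g ` closure (f ` B) \<subseteq> closure (g ` f ` B)"
    by (rule continuous_image_closure_subset[OF homeomorphism_cont2[OF hom] T])
  also have "g ` f ` B = B"
    using hom assms(4) by (rule homeomorphism_image_image)
  finally have "f ` g ` closure (f ` B) \<subseteq> f ` closure B" by (rule image_mono)
  moreover have "f ` g ` closure (f ` B) = closure (f ` B)"
    using T homeomorphism_apply2[OF hom] by (force simp: image_iff)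
  ultimately show "closure (f ` B) \<subseteq> f ` closure B" by simp
qed

lemma open_Collect_ball_compact:
  fixes f :: "'a::topological_space \<times> 'b::topological_space \<Rightarrow> 'c::topological_space"
  assumes "compact K" "continuous_on UNIV f" "open W"
  shows "open {x. \<forall>t\<in>K. f (x, t) \<in> W}"
proof (rule Topological_Spaces.openI)
  fix x0 assume "x0 \<in> {x. \<forall>t\<in>K. f (x, t) \<in> W}"
  then have "{x0} \<times> K \<subseteq> f -` W" by auto
  moreover have "open (f -` W)"
    using open_vimage[OF assms(3,2)] .
  ultimately obtain X0 where "x0 \<in> X0" "open X0" "X0 \<times> K \<subseteq> f -` W"
    using Elementary_Topology.tube_lemma[OF assms(1)] by metis
  then show "\<exists>T. open T \<and> x0 \<in> T \<and> T \<subseteq> {x. \<forall>t\<in>K. f (x, t) \<in> W}"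
    by (intro exI[of _ X0]) auto
qed

section \<open>The Hilbert cube and interleaved coordinates\<close>

definition evens :: "(nat \<Rightarrow> 'a) \<Rightarrow> nat \<Rightarrow> 'a" where
  "evens x = (\<lambda>k. x (2 * k))"

definition odds :: "(nat \<Rightarrow> 'a) \<Rightarrow> nat \<Rightarrow> 'a" where
  "odds x = (\<lambda>k. x (2 * k + 1))"

definition interleave :: "(nat \<Rightarrow> 'a) \<Rightarrow> (nat \<Rightarrow> 'a) \<Rightarrow> nat \<Rightarrow> 'a" where
  "interleave e q i = (if even i then e (i div 2) else q (i div 2))"

lemma evens_interleave [simp]: "evens (interleave e q) = e"
  by (simp add: evens_def interleave_def)

lemma odds_interleave [simp]: "odds (interleave e q) = q"
  by (simp add: odds_def interleave_def)

lemma interleave_evens_odds [simp]: "interleave (evens x) (odds x) = x"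
proof
  fix i show "interleave (evens x) (odds x) i = x i"
    by (cases "even i") (auto simp: interleave_def evens_def odds_def elim!: evenE oddE)
qed

lemma interleave_eq_iff: "x = interleave e q \<longleftrightarrow> evens x = e \<and> odds x = q"
  by (metis evens_interleave interleave_evens_odds odds_interleave)

lemma continuous_on_evens_component: "continuous_on S (\<lambda>x. evens x k)"
  unfolding evens_def by (rule continuous_on_subset[OF continuous_on_product_coordinates]) auto

lemma continuous_on_odds: "continuous_on S odds"
  unfolding odds_def
  by (intro continuous_on_coordinatewise_then_product
        continuous_on_subset[OF continuous_on_product_coordinates]) auto

lemma continuous_on_interleave:
  assumes "continuous_on S a" "continuous_on S b"
  shows "continuous_on S (\<lambda>x. interleave (a x) (b x))"
proof (rule continuous_on_coordinatewise_then_product)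
  fix i
  show "continuous_on S (\<lambda>x. interleave (a x) (b x) i)"
    using continuous_on_product_then_coordinatewise[OF assms(1)]
      continuous_on_product_then_coordinatewise[OF assms(2)]
    by (cases "even i") (simp_all add: interleave_def)
qed

lemma hilbert_cube_eq_PiE: "hilbert_cube = PiE UNIV (\<lambda>_. {0..1})"
  by (auto simp: hilbert_cube_def PiE_def extensional_def)

lemma compact_hilbert_cube: "compact hilbert_cube"
  by (metis compactin_PiE compactin_euclidean_iff compact_Icc euclidean_product_topology
      hilbert_cube_eq_PiE)

lemma connected_hilbert_cube: "connected hilbert_cube"
  by (metis connectedin_PiE connectedin_iff_connected connected_Icc euclidean_product_topology
      hilbert_cube_eq_PiE)

lemma in_hilbert_cube_iff_evens_odds:
  "x \<in> hilbert_cube \<longleftrightarrow> evens x \<in> hilbert_cube \<and> odds x \<in> hilbert_cube"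
proof -
  have "(\<forall>i. x i \<in> {0..1}) \<longleftrightarrow> (\<forall>k. x (2 * k) \<in> {0..1}) \<and> (\<forall>k. x (2 * k + 1) \<in> {0..1})"
    by (metis oddE evenE)
  then show ?thesis by (simp add: hilbert_cube_def evens_def odds_def)
qed

section \<open>The hedgehog of a sequence of compact sets\<close>

definition hedgehog :: "(nat \<Rightarrow> (nat \<Rightarrow> real) set) \<Rightarrow> (nat \<Rightarrow> real) set" where
  "hedgehog A = {x. evens x \<in> hilbert_cube \<and> odds x \<in> hilbert_cube
      \<and> (\<forall>j k. j = k \<or> evens x j = 0 \<or> evens x k = 0)
      \<and> (\<forall>n. evens x n = 0 \<or> evens x n = 1 \<or> odds x \<in> A n)}"

definition hair :: "nat \<Rightarrow> real \<Rightarrow> (nat \<Rightarrow> real) \<Rightarrow> nat \<Rightarrow> real" where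
  "hair n t q = interleave ((\<lambda>_. 0)(n := t)) q"

definition spine :: "(nat \<Rightarrow> real) set" where
  "spine = interleave (\<lambda>_. 0) ` hilbert_cube"

definition bristle :: "(nat \<Rightarrow> (nat \<Rightarrow> real) set) \<Rightarrow> nat \<Rightarrow> (nat \<Rightarrow> real) set" where
  "bristle A n = {x \<in> hedgehog A. evens x n > 0}"

lemma evens_hair [simp]: "evens (hair n t q) = (\<lambda>_. 0)(n := t)"
  by (simp add: hair_def)

lemma odds_hair [simp]: "odds (hair n t q) = q"
  by (simp add: hair_def)

lemma hair_zero: "hair n 0 q = interleave (\<lambda>_. 0) q"
  by (simp add: hair_def fun_upd_idem)

lemma mem_spine_iff: "x \<in> spine \<longleftrightarrow> evens x = (\<lambda>_. 0) \<and> odds x \<in> hilbert_cube"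
  unfolding spine_def by (metis (no_types, lifting) image_iff interleave_eq_iff)

lemma continuous_on_hair: "continuous_on S (\<lambda>p. hair n (snd p) (fst p))"
  unfolding hair_def
proof (rule continuous_on_interleave)
  show "continuous_on S (\<lambda>p :: (nat \<Rightarrow> real) \<times> real. (\<lambda>_. 0)(n := snd p))"
  proof (rule continuous_on_coordinatewise_then_product)
    fix i
    show "continuous_on S (\<lambda>p :: (nat \<Rightarrow> real) \<times> real. ((\<lambda>_. 0)(n := snd p)) i)"
      by (cases "i = n") (auto intro!: continuous_intros)
  qed
qed (intro continuous_intros)

lemma continuous_on_hair_length: "continuous_on S (\<lambda>t. hair n t q)"
  using continuous_on_compose[OF continuous_on_Pair[OF continuous_on_const continuous_on_id]
      continuous_on_hair]
  by (simp add: o_def)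

lemma continuous_on_hair_base: "continuous_on S (hair n t)"
  using continuous_on_compose[OF continuous_on_Pair[OF continuous_on_id continuous_on_const]
      continuous_on_hair]
  by (simp add: o_def)

lemma hair_in_hedgehog_iff:
  "hair n t q \<in> hedgehog A \<longleftrightarrow> t \<in> {0..1} \<and> q \<in> hilbert_cube \<and> (t = 0 \<or> t = 1 \<or> q \<in> A n)"
  by (auto simp: hedgehog_def hilbert_cube_def)

lemma mem_hedgehog_iff:
  "x \<in> hedgehog A \<longleftrightarrow>
     (\<exists>n t q. x = hair n t q \<and> t \<in> {0..1} \<and> q \<in> hilbert_cube \<and> (t = 0 \<or> t = 1 \<or> q \<in> A n))"
proof
  assume x: "x \<in> hedgehog A"
  have "\<exists>n. evens x = (\<lambda>_. 0)(n := evens x n)"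
  proof (cases "\<exists>n. evens x n \<noteq> 0")
    case True
    then obtain n where "evens x n \<noteq> 0" by blast
    then have "evens x = (\<lambda>_. 0)(n := evens x n)"
      using x by (auto simp: hedgehog_def fun_eq_iff)
    then show ?thesis by blast
  qed (auto simp: fun_eq_iff)
  then obtain n where "x = hair n (evens x n) (odds x)"
    by (metis hair_def interleave_eq_iff)
  then show "\<exists>n t q. x = hair n t q \<and> t \<in> {0..1} \<and> q \<in> hilbert_cube \<and> (t = 0 \<or> t = 1 \<or> q \<in> A n)"
    by (metis hair_in_hedgehog_iff x)
qed (auto simp: hair_in_hedgehog_iff)

lemma spine_subset_hedgehog: "spine \<subseteq> hedgehog A"
  by (auto simp: spine_def hair_in_hedgehog_iff simp flip: hair_zero[of 0])

lemma closed_hedgehog: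
  assumes "\<And>n. closed (A n)"
  shows "closed (hedgehog A)"
proof -
  have "closed hilbert_cube" by (simp add: compact_hilbert_cube compact_imp_closed)
  moreover have "continuous_on UNIV evens"
    by (intro continuous_on_coordinatewise_then_product continuous_on_evens_component)
  ultimately show ?thesis
    unfolding hedgehog_def using assms
    by (intro closed_Collect_conj closed_Collect_all closed_Collect_disj closed_Collect_eq
        closed_Collect_continuous_mem continuous_on_evens_component continuous_on_odds
        continuous_on_const)
qed

lemma hedgehog_subset_hilbert_cube: "hedgehog A \<subseteq> hilbert_cube"
  unfolding hedgehog_def using in_hilbert_cube_iff_evens_odds by blast

lemma hedgehog_in_KQ:
  assumes "\<And>n. closed (A n)"
  shows "hedgehog A \<in> KQ"
proof -
  have "compact (hilbert_cube \<inter> hedgehog A)"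
    using compact_hilbert_cube closed_hedgehog[OF assms] by (rule compact_Int_closed)
  then show ?thesis
    using hedgehog_subset_hilbert_cube by (simp add: KQ_def Int_absorb1)
qed

lemma spine_in_KQ: "spine \<in> KQ"
proof -
  have "compact spine"
    unfolding spine_def
    by (intro compact_continuous_image compact_hilbert_cube continuous_on_interleave
        continuous_on_const continuous_on_id)
  then show ?thesis
    using spine_subset_hedgehog hedgehog_subset_hilbert_cube by (auto simp: KQ_def)
qed

lemma hair_islimpt_along_hair:
  assumes "t \<in> {0..1}" "q \<in> A n" "q \<in> hilbert_cube"
  shows "hair n t q islimpt hedgehog A"
proof -
  define path where "path s = hair n s q" for s
  have "continuous_on UNIV path"
    unfolding path_def by (rule continuous_on_hair_length)
  moreover have "inj path"
  proof (rule injI)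
    fix a b assume "path a = path b"
    then have "evens (path a) n = evens (path b) n" by simp
    then show "a = b" by (simp add: path_def)
  qed
  moreover have "t islimpt {0<..1}" using assms(1) by simp
  ultimately have "path t islimpt path ` {0<..1}"
    by (rule islimpt_injective_image)
  moreover have "path ` {0<..1} \<subseteq> hedgehog A"
    using assms(2,3) by (auto simp: path_def hair_in_hedgehog_iff)
  ultimately show ?thesis
    unfolding path_def by (rule islimpt_subset)
qed

lemma hair_islimpt_across_base:
  assumes "t = 0 \<or> t = 1" "q \<in> hilbert_cube"
  shows "hair n t q islimpt hedgehog A"
proof -
  define path where "path s = hair n t (q(0 := s))" for s
  have "continuous_on UNIV (\<lambda>s. q(0 := s))"
  proof (rule continuous_on_coordinatewise_then_product)
    fix i show "continuous_on UNIV (\<lambda>s. (q(0 := s)) i)"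
      by (cases "i = 0") (simp_all add: continuous_on_id continuous_on_const)
  qed
  then have "continuous_on UNIV path"
    unfolding path_def by (rule continuous_on_compose2[OF continuous_on_hair_base]) auto
  moreover have "inj path"
  proof (rule injI)
    fix a b assume "path a = path b"
    then have "odds (path a) 0 = odds (path b) 0" by simp
    then show "a = b" by (simp add: path_def)
  qed
  moreover have "q 0 islimpt {0..1}" using assms(2) by (simp add: hilbert_cube_def)
  ultimately have "path (q 0) islimpt path ` {0..1}"
    by (rule islimpt_injective_image)
  moreover have "path ` {0..1} \<subseteq> hedgehog A"
    using assms by (auto simp: path_def hair_in_hedgehog_iff hilbert_cube_def)
  ultimately have "path (q 0) islimpt hedgehog A"
    by (rule islimpt_subset)
  then show ?thesis by (simp add: path_def)
qed

lemma perfect_hedgehog: "perfect_set (hedgehog A)"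
  unfolding perfect_set_def
proof
  fix x assume "x \<in> hedgehog A"
  then obtain n t q where x: "x = hair n t q" and "t \<in> {0..1}" "q \<in> hilbert_cube"
    and "t = 0 \<or> t = 1 \<or> q \<in> A n"
    by (auto simp: mem_hedgehog_iff)
  then consider "t = 0 \<or> t = 1" | "q \<in> A n" by blast
  then show "x islimpt hedgehog A"
  proof cases
    case 1
    then show ?thesis
      unfolding x using \<open>q \<in> hilbert_cube\<close> by (rule hair_islimpt_across_base)
  next
    case 2
    with \<open>t \<in> {0..1}\<close> show ?thesis
      unfolding x using \<open>q \<in> hilbert_cube\<close> by (rule hair_islimpt_along_hair)
  qed
qed

lemma hair_in_bristle_iff:
  "hair n t q \<in> bristle A n \<longleftrightarrow> t \<in> {0<..1} \<and> q \<in> hilbert_cube \<and> (t = 1 \<or> q \<in> A n)"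
  by (auto simp: bristle_def hair_in_hedgehog_iff)

lemma tip_in_bristle: "hair n 1 (\<lambda>_. 0) \<in> bristle A n"
  by (simp add: hair_in_bristle_iff hilbert_cube_def)

lemma bristle_eq:
  "bristle A n = {hair n t q | t q. t \<in> {0<..1} \<and> q \<in> hilbert_cube \<and> (t = 1 \<or> q \<in> A n)}"
proof (intro set_eqI iffI)
  fix x assume x: "x \<in> bristle A n"
  then obtain m t q where "x = hair m t q" and "evens x n > 0"
    by (auto simp: bristle_def mem_hedgehog_iff)
  then have "m = n" by (auto split: if_splits)
  with x \<open>x = hair m t q\<close> show "x \<in> {hair n t q | t q. t \<in> {0<..1} \<and> q \<in> hilbert_cube \<and> (t = 1 \<or> q \<in> A n)}"
    by (auto simp: hair_in_bristle_iff)
qed (auto simp: hair_in_bristle_iff)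

lemma connected_bristle:
  assumes "A n \<subseteq> hilbert_cube"
  shows "connected (bristle A n)"
proof -
  define tip_cube where "tip_cube = hair n 1 ` hilbert_cube"
  define segment where "segment q = (\<lambda>t. hair n t q) ` {0<..1}" for q
  have eq: "bristle A n = \<Union>(insert tip_cube ((\<lambda>q. tip_cube \<union> segment q) ` A n))"
  proof
    show "bristle A n \<subseteq> \<Union>(insert tip_cube ((\<lambda>q. tip_cube \<union> segment q) ` A n))"
    proof
      fix x assume "x \<in> bristle A n"
      then obtain t q where "x = hair n t q" "t \<in> {0<..1}" "q \<in> hilbert_cube" "t = 1 \<or> q \<in> A n"
        by (auto simp: bristle_eq)
      then have "x \<in> tip_cube \<or> q \<in> A n \<and> x \<in> segment q"
        by (auto simp: tip_cube_def segment_def)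
      then show "x \<in> \<Union>(insert tip_cube ((\<lambda>q. tip_cube \<union> segment q) ` A n))"
        by blast
    qed
    show "\<Union>(insert tip_cube ((\<lambda>q. tip_cube \<union> segment q) ` A n)) \<subseteq> bristle A n"
      using assms by (auto simp: tip_cube_def segment_def hair_in_bristle_iff)
  qed
  have tip: "connected tip_cube"
    unfolding tip_cube_def
    by (intro connected_continuous_image continuous_on_hair_base connected_hilbert_cube)
  have pieces: "connected (tip_cube \<union> segment q)" if "q \<in> A n" for q
  proof (rule connected_Un[OF tip])
    show "connected (segment q)"
      unfolding segment_def by (intro connected_continuous_image continuous_on_hair_length) simp
    have "hair n 1 q \<in> tip_cube \<inter> segment q"
      using that assms unfolding tip_cube_def segment_def
      by (intro IntI imageI image_eqI[where x=1]) auto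
    then show "tip_cube \<inter> segment q \<noteq> {}" by blast
  qed
  have "hair n 1 (\<lambda>_. 0) \<in> tip_cube"
    by (simp add: tip_cube_def hilbert_cube_def)
  then have "\<Inter>(insert tip_cube ((\<lambda>q. tip_cube \<union> segment q) ` A n)) \<noteq> {}"
    by blast
  then show ?thesis
    unfolding eq using tip pieces by (intro connected_Union) blast+
qed

section \<open>Homeomorphisms of hedgehogs\<close>

lemma hedgehog_Diff_spine: "hedgehog A - spine = (\<Union>n. bristle A n)"
proof
  show "hedgehog A - spine \<subseteq> (\<Union>n. bristle A n)"
  proof
    fix x assume x: "x \<in> hedgehog A - spine"
    then obtain n t q where "x = hair n t q" "t \<in> {0..1}" "q \<in> hilbert_cube"
      "t = 0 \<or> t = 1 \<or> q \<in> A n"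
      by (auto simp: mem_hedgehog_iff)
    moreover have "t \<noteq> 0"
      using x calculation by (auto simp: hair_zero spine_def)
    ultimately have "x \<in> bristle A n"
      by (auto simp: hair_in_bristle_iff)
    then show "x \<in> (\<Union>n. bristle A n)" by blast
  qed
  show "(\<Union>n. bristle A n) \<subseteq> hedgehog A - spine"
    by (auto simp: bristle_def mem_spine_iff)
qed

lemma hedgehog_positive_evens_unique:
  assumes "x \<in> hedgehog A" "evens x j > 0" "evens x k > 0"
  shows "j = k"
proof -
  have "j = k \<or> evens x j = 0 \<or> evens x k = 0"
    using assms(1) by (simp add: hedgehog_def)
  then show ?thesis using assms(2,3) by auto
qed

lemma bristles_disjoint: "m \<noteq> n \<Longrightarrow> bristle A m \<inter> bristle A n = {}"
  by (auto simp: bristle_def dest: hedgehog_positive_evens_unique)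

lemma homeomorphism_bristle_point_in_bristle:
  assumes hom: "homeomorphism (hedgehog A) (hedgehog A') F G" and spine: "F ` spine = spine"
    and "x \<in> bristle A n"
  shows "\<exists>m. F x \<in> bristle A' m"
proof -
  have "F x \<in> F ` (hedgehog A - spine)"
    using assms(3) hedgehog_Diff_spine by blast
  also have "\<dots> = hedgehog A' - spine"
    using homeomorphism_image_Diff[OF hom spine_subset_hedgehog] spine by simp
  finally show ?thesis
    by (simp add: hedgehog_Diff_spine)
qed

text \<open>The image of the connected set \<^term>\<open>bristle A n\<close> avoids the spine, and the
  bristles of \<^term>\<open>A'\<close> cut \<^term>\<open>hedgehog A' - spine\<close> into disjoint relatively open
  pieces.\<close>
lemma homeomorphism_bristle_subset:
  assumes hom: "homeomorphism (hedgehog A) (hedgehog A') F G" and spine: "F ` spine = spine"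
    and "A n \<subseteq> hilbert_cube" and x: "x \<in> bristle A n" "F x \<in> bristle A' m"
  shows "F ` bristle A n \<subseteq> bristle A' m"
proof -
  let ?S = "F ` bristle A n"
  have sub: "bristle A n \<subseteq> hedgehog A" by (auto simp: bristle_def)
  have "connected ?S"
    using connected_continuous_image[OF continuous_on_subset[OF homeomorphism_cont1[OF hom] sub]
        connected_bristle[of A n, OF assms(3)]] .
  have S: "?S \<subseteq> hedgehog A' - spine"
  proof
    fix y assume "y \<in> ?S"
    then obtain z k where "y = F z" "F z \<in> bristle A' k"
      using homeomorphism_bristle_point_in_bristle[OF hom spine] by blast
    then show "y \<in> hedgehog A' - spine"
      by (simp add: hedgehog_Diff_spine) blast
  qed
  define U where "U = {y :: nat \<Rightarrow> real. evens y m > 0}"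
  define V where "V = (\<Union>k\<in>- {m}. {y :: nat \<Rightarrow> real. evens y k > 0})"
  have "open U" "open V"
    unfolding U_def V_def
    by (intro open_UN ballI open_Collect_less continuous_on_const continuous_on_evens_component)+
  moreover have "U \<inter> V \<inter> ?S = {}"
    using S by (auto simp: U_def V_def dest: hedgehog_positive_evens_unique)
  moreover have "?S \<subseteq> U \<union> V"
    using S by (auto simp: U_def V_def hedgehog_Diff_spine bristle_def)
  moreover have "U \<inter> ?S \<noteq> {}"
    using x by (auto simp: U_def bristle_def)
  ultimately have "?S \<subseteq> U"
    using connectedD[OF \<open>connected ?S\<close>] by blast
  then show ?thesis
    using S by (auto simp: U_def bristle_def)
qed

lemma homeomorphism_bristles_into_bristles:
  assumes hom: "homeomorphism (hedgehog A) (hedgehog A') F G" and spine: "F ` spine = spine"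
    and A: "\<And>n. A n \<subseteq> hilbert_cube"
  obtains \<sigma> where "\<And>n. F ` bristle A n \<subseteq> bristle A' (\<sigma> n)"
proof -
  have "\<forall>n. \<exists>k. F (hair n 1 (\<lambda>_. 0)) \<in> bristle A' k"
    using homeomorphism_bristle_point_in_bristle[OF hom spine tip_in_bristle] by blast
  then obtain \<sigma> where "\<And>n. F (hair n 1 (\<lambda>_. 0)) \<in> bristle A' (\<sigma> n)"
    using choice[where Q = "\<lambda>n k. F (hair n 1 (\<lambda>_. 0)) \<in> bristle A' k"] by blast
  then show thesis
    using that homeomorphism_bristle_subset[OF hom spine A tip_in_bristle] by blast
qed

lemma homeomorphism_hedgehogs_permute_bristles:
  assumes A: "\<And>n. A n \<subseteq> hilbert_cube" and A': "\<And>n. A' n \<subseteq> hilbert_cube"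
    and hom: "homeomorphism (hedgehog A) (hedgehog A') F G" and spine: "F ` spine = spine"
  obtains \<sigma> where "bij \<sigma>" "\<And>n. F ` bristle A n = bristle A' (\<sigma> n)"
proof -
  have hom': "homeomorphism (hedgehog A') (hedgehog A) G F"
    using hom by (rule homeomorphism_symD)
  have spine': "G ` spine = spine"
    using homeomorphism_image_image[OF hom spine_subset_hedgehog] spine by simp
  obtain \<sigma> where F_into: "\<And>n. F ` bristle A n \<subseteq> bristle A' (\<sigma> n)"
    using homeomorphism_bristles_into_bristles[OF hom spine A] by blast
  obtain \<tau> where G_into: "\<And>n. G ` bristle A' n \<subseteq> bristle A (\<tau> n)"
    using homeomorphism_bristles_into_bristles[OF hom' spine' A'] by blast
  have GF: "G (F x) = x" if "x \<in> bristle A n" for x n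
    using that homeomorphism_apply1[OF hom] by (auto simp: bristle_def)
  have FG: "F (G y) = y" if "y \<in> bristle A' n" for y n
    using that homeomorphism_apply2[OF hom] by (auto simp: bristle_def)
  have \<tau>\<sigma>: "\<tau> (\<sigma> n) = n" for n
  proof -
    have "hair n 1 (\<lambda>_. 0) \<in> bristle A (\<tau> (\<sigma> n))"
      using G_into F_into tip_in_bristle GF[OF tip_in_bristle] by (metis image_subset_iff)
    then show ?thesis using tip_in_bristle bristles_disjoint by blast
  qed
  have \<sigma>\<tau>: "\<sigma> (\<tau> n) = n" for n
  proof -
    have "hair n 1 (\<lambda>_. 0) \<in> bristle A' (\<sigma> (\<tau> n))"
      using F_into G_into tip_in_bristle FG[OF tip_in_bristle] by (metis image_subset_iff)
    then show ?thesis using tip_in_bristle bristles_disjoint by blast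
  qed
  have "F ` bristle A n = bristle A' (\<sigma> n)" for n
  proof
    show "bristle A' (\<sigma> n) \<subseteq> F ` bristle A n"
    proof
      fix y assume "y \<in> bristle A' (\<sigma> n)"
      then have "G y \<in> bristle A n" "F (G y) = y"
        using G_into[of "\<sigma> n"] FG \<tau>\<sigma> by auto
      then show "y \<in> F ` bristle A n" by (metis image_eqI)
    qed
  qed (rule F_into)
  moreover have "bij \<sigma>"
    by (rule o_bij[of \<tau>]) (auto simp: \<tau>\<sigma> \<sigma>\<tau>)
  ultimately show thesis using that by blast
qed

lemma closure_bristle_Int_spine:
  assumes "closed (A n)" "A n \<subseteq> hilbert_cube"
  shows "closure (bristle A n) \<inter> spine = interleave (\<lambda>_. 0) ` A n"
proof
  show "interleave (\<lambda>_. 0) ` A n \<subseteq> closure (bristle A n) \<inter> spine"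
  proof
    fix x assume "x \<in> interleave (\<lambda>_. 0) ` A n"
    then obtain q where q: "q \<in> A n" and x: "x = hair n 0 q"
      by (auto simp: hair_zero)
    \<comment> \<open>the hair over q accumulates at its foot\<close>
    have "(\<lambda>t. hair n t q) ` closure {0<..1} \<subseteq> closure ((\<lambda>t. hair n t q) ` {0<..1})"
      by (rule continuous_image_closure_subset[OF continuous_on_hair_length[of UNIV]]) simp
    also have "\<dots> \<subseteq> closure (bristle A n)"
      using q assms(2) by (intro closure_mono) (auto simp: hair_in_bristle_iff)
    finally have "x \<in> closure (bristle A n)"
      unfolding x by auto
    moreover have "x \<in> spine"
      using q assms(2) x by (auto simp: hair_zero spine_def)
    ultimately show "x \<in> closure (bristle A n) \<inter> spine" by blast
  qed
  define C where "C = {x :: nat \<Rightarrow> real. evens x n = 1 \<or> odds x \<in> A n}"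
  have "closed C"
    unfolding C_def
    by (intro closed_Collect_disj closed_Collect_eq closed_Collect_continuous_mem
        continuous_on_evens_component continuous_on_const continuous_on_odds assms(1))
  moreover have "bristle A n \<subseteq> C"
    by (auto simp: C_def bristle_eq)
  ultimately have "closure (bristle A n) \<subseteq> C"
    by (rule closure_minimal[rotated])
  then show "closure (bristle A n) \<inter> spine \<subseteq> interleave (\<lambda>_. 0) ` A n"
    by (auto simp: C_def mem_spine_iff interleave_eq_iff intro!: image_eqI)
qed

lemma homeomorphism_hilbert_cube_spine:
  "homeomorphism hilbert_cube spine (interleave (\<lambda>_. 0)) odds"
  by (rule homeomorphismI)
    (auto simp: spine_def intro: continuous_on_interleave continuous_on_const continuous_on_id
      continuous_on_odds)

lemma homeomorphism_spine_restriction: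
  assumes "homeomorphism (hedgehog A) (hedgehog A') F G" "F ` spine = spine"
  shows "homeomorphism hilbert_cube hilbert_cube
           (\<lambda>q. odds (F (interleave (\<lambda>_. 0) q))) (\<lambda>q. odds (G (interleave (\<lambda>_. 0) q)))"
proof -
  have "homeomorphism spine spine F G"
    using assms(1) spine_subset_hedgehog spine_subset_hedgehog assms(2)
    by (rule homeomorphism_of_subsets)
  then show ?thesis
    using homeomorphism_compose[OF homeomorphism_compose[OF homeomorphism_hilbert_cube_spine]
        homeomorphism_symD[OF homeomorphism_hilbert_cube_spine]]
    by (simp add: comp_def)
qed

lemma perm_equiv_if_homeomorphic_hedgehogs:
  assumes A: "\<And>n. A n \<in> KQ" and A': "\<And>n. A' n \<in> KQ"
    and hom: "homeomorphism (hedgehog A) (hedgehog A') F G" and spine: "F ` spine = spine"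
  shows "perm_equiv A A'"
proof -
  have closed: "closed (A n)" "closed (A' n)" and sub: "A n \<subseteq> hilbert_cube" "A' n \<subseteq> hilbert_cube"
    for n using A A' by (auto simp: KQ_def compact_imp_closed)
  obtain \<sigma> where "bij \<sigma>" and bristles: "\<And>n. F ` bristle A n = bristle A' (\<sigma> n)"
    using homeomorphism_hedgehogs_permute_bristles[OF sub hom spine] by blast
  define f where "f q = odds (F (interleave (\<lambda>_. 0) q))" for q
  have "f ` A n = A' (\<sigma> n)" for n
  proof -
    have inj: "inj_on F (hedgehog A)"
      using hom by (rule homeomorphism_inj_on)
    have bristle_sub: "bristle A n \<subseteq> hedgehog A"
      by (auto simp: bristle_def)
    then have "closure (bristle A n) \<subseteq> hedgehog A"
      by (intro closure_minimal closed_hedgehog closed)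
    then have "F ` (closure (bristle A n) \<inter> spine) = F ` closure (bristle A n) \<inter> F ` spine"
      using inj spine_subset_hedgehog by (intro inj_on_image_Int) auto
    also have "\<dots> = closure (bristle A' (\<sigma> n)) \<inter> spine"
      using homeomorphism_image_closure[OF hom closed_hedgehog closed_hedgehog bristle_sub] closed
        bristles spine by simp
    finally have "F ` interleave (\<lambda>_. 0) ` A n = interleave (\<lambda>_. 0) ` A' (\<sigma> n)"
      using closure_bristle_Int_spine closed sub by simp
    then have "odds ` F ` interleave (\<lambda>_. 0) ` A n = odds ` interleave (\<lambda>_. 0) ` A' (\<sigma> n)"
      by (rule arg_cong)
    then show ?thesis
      unfolding f_def by (simp add: image_image)
  qed
  then show ?thesis
    unfolding perm_equiv_def f_def
    using homeomorphism_spine_restriction[OF hom spine] \<open>bij \<sigma>\<close> by blast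
qed

definition hedgehog_map ::
    "(nat \<Rightarrow> nat) \<Rightarrow> ((nat \<Rightarrow> real) \<Rightarrow> nat \<Rightarrow> real) \<Rightarrow> (nat \<Rightarrow> real) \<Rightarrow> nat \<Rightarrow> real" where
  "hedgehog_map \<tau> f x = interleave (evens x \<circ> \<tau>) (f (odds x))"

lemma odds_in_hilbert_cube: "x \<in> hedgehog A \<Longrightarrow> odds x \<in> hilbert_cube"
  by (simp add: hedgehog_def)

lemma hedgehog_map_in_hedgehog:
  assumes f: "f ` hilbert_cube \<subseteq> hilbert_cube" and "inj \<tau>" and fA: "\<And>m. f ` A (\<tau> m) \<subseteq> A' m"
    and x: "x \<in> hedgehog A"
  shows "hedgehog_map \<tau> f x \<in> hedgehog A'"
proof -
  have "evens x \<in> hilbert_cube" "odds x \<in> hilbert_cube"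
    and disj: "\<And>j k. j = k \<or> evens x j = 0 \<or> evens x k = 0"
    and on_A: "\<And>m. evens x m = 0 \<or> evens x m = 1 \<or> odds x \<in> A m"
    using x by (auto simp: hedgehog_def)
  then have "evens x \<circ> \<tau> \<in> hilbert_cube" "f (odds x) \<in> hilbert_cube"
    using f by (auto simp: hilbert_cube_def image_subset_iff)
  moreover have "j = k \<or> evens x (\<tau> j) = 0 \<or> evens x (\<tau> k) = 0" for j k
    using disj[of "\<tau> j" "\<tau> k"] \<open>inj \<tau>\<close> by (auto dest: injD)
  moreover have "evens x (\<tau> m) = 0 \<or> evens x (\<tau> m) = 1 \<or> f (odds x) \<in> A' m" for m
    using on_A[of "\<tau> m"] fA[of m] by blast
  ultimately show ?thesis
    by (simp add: hedgehog_map_def hedgehog_def)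
qed

lemma hedgehog_map_hedgehog_map:
  "hedgehog_map \<tau> f (hedgehog_map \<sigma> g x) = interleave (evens x \<circ> (\<sigma> \<circ> \<tau>)) (f (g (odds x)))"
  by (simp add: hedgehog_map_def comp_assoc)

lemma hedgehog_map_spine_point:
  "hedgehog_map \<tau> f (interleave (\<lambda>_. 0) q) = interleave (\<lambda>_. 0) (f q)"
  by (simp add: hedgehog_map_def comp_def)

lemma continuous_on_hedgehog_map:
  assumes "continuous_on hilbert_cube f" "odds ` S \<subseteq> hilbert_cube"
  shows "continuous_on S (hedgehog_map \<tau> f)"
  unfolding hedgehog_map_def
proof (rule continuous_on_interleave)
  show "continuous_on S (\<lambda>x. evens x \<circ> \<tau>)"
    by (rule continuous_on_coordinatewise_then_product)
      (simp add: continuous_on_evens_component)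
  show "continuous_on S (\<lambda>x. f (odds x))"
    using assms by (intro continuous_on_compose2[OF _ continuous_on_odds])
qed

lemma homeomorphism_hedgehog_map:
  assumes hom: "homeomorphism hilbert_cube hilbert_cube f g" and "bij \<sigma>"
    and A: "\<And>n. A n \<subseteq> hilbert_cube" and fA: "\<And>n. f ` A n = A' (\<sigma> n)"
  shows "homeomorphism (hedgehog A) (hedgehog A') (hedgehog_map (inv \<sigma>) f) (hedgehog_map \<sigma> g)"
proof (rule homeomorphismI)
  have \<sigma>_inv: "inv \<sigma> \<circ> \<sigma> = id" "\<sigma> \<circ> inv \<sigma> = id" "inj \<sigma>" "inj (inv \<sigma>)"
    using \<open>bij \<sigma>\<close> inj_iff[of \<sigma>] surj_iff[of \<sigma>]
    by (auto simp: bij_is_inj bij_is_surj bij_imp_bij_inv)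
  show "continuous_on (hedgehog A) (hedgehog_map (inv \<sigma>) f)"
    "continuous_on (hedgehog A') (hedgehog_map \<sigma> g)"
    using hom odds_in_hilbert_cube
    by (auto intro!: continuous_on_hedgehog_map dest: homeomorphism_cont1 homeomorphism_cont2)
  have fQ: "f ` hilbert_cube \<subseteq> hilbert_cube" and gQ: "g ` hilbert_cube \<subseteq> hilbert_cube"
    using homeomorphism_image1[OF hom] homeomorphism_image2[OF hom] by simp_all
  have fA': "f ` A (inv \<sigma> m) \<subseteq> A' m" for m
    using fA \<sigma>_inv(2) by (metis comp_apply id_apply order_refl)
  have gA': "g ` A' (\<sigma> m) \<subseteq> A m" for m
    using homeomorphism_image_image[OF hom A] fA by simp
  show "hedgehog_map (inv \<sigma>) f ` hedgehog A \<subseteq> hedgehog A'"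
  proof (rule image_subsetI)
    fix x assume "x \<in> hedgehog A"
    then show "hedgehog_map (inv \<sigma>) f x \<in> hedgehog A'"
      by (rule hedgehog_map_in_hedgehog[where A = A and A' = A', OF fQ \<sigma>_inv(4) fA'])
  qed
  show "hedgehog_map \<sigma> g ` hedgehog A' \<subseteq> hedgehog A"
  proof (rule image_subsetI)
    fix y assume "y \<in> hedgehog A'"
    then show "hedgehog_map \<sigma> g y \<in> hedgehog A"
      by (rule hedgehog_map_in_hedgehog[where A = A' and A' = A, OF gQ \<sigma>_inv(3) gA'])
  qed
  show "hedgehog_map \<sigma> g (hedgehog_map (inv \<sigma>) f x) = x" if "x \<in> hedgehog A" for x
    using homeomorphism_apply1[OF hom odds_in_hilbert_cube[OF that]] \<sigma>_inv(1)
    by (simp add: hedgehog_map_hedgehog_map)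
  show "hedgehog_map (inv \<sigma>) f (hedgehog_map \<sigma> g y) = y" if "y \<in> hedgehog A'" for y
    using homeomorphism_apply2[OF hom odds_in_hilbert_cube[OF that]] \<sigma>_inv(2)
    by (simp add: hedgehog_map_hedgehog_map)
qed

lemma hedgehog_map_image_spine:
  "f ` hilbert_cube = hilbert_cube \<Longrightarrow> hedgehog_map \<tau> f ` spine = spine"
  unfolding spine_def by (simp add: image_image hedgehog_map_spine_point)
    (simp flip: image_image[of "interleave (\<lambda>_. 0)" f])

lemma homeomorphic_hedgehogs_if_perm_equiv:
  assumes "\<And>n. A n \<subseteq> hilbert_cube" and "perm_equiv A A'"
  obtains F G where "homeomorphism (hedgehog A) (hedgehog A') F G" "F ` spine = spine"
proof -
  obtain f g \<sigma> where hom: "homeomorphism hilbert_cube hilbert_cube f g" and "bij \<sigma>"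
    and fA: "\<And>n. f ` A n = A' (\<sigma> n)"
    using \<open>perm_equiv A A'\<close> unfolding perm_equiv_def by blast
  show thesis
    by (rule that[OF homeomorphism_hedgehog_map[where A' = A', OF hom \<open>bij \<sigma>\<close> assms(1) fA]
          hedgehog_map_image_spine[OF homeomorphism_image1[OF hom]]])
qed

lemma perm_equiv_iff_homeomorphic_hedgehogs:
  assumes "\<And>n. A n \<in> KQ" "\<And>n. A' n \<in> KQ"
  shows "perm_equiv A A' \<longleftrightarrow>
           (\<exists>F G. homeomorphism (hedgehog A) (hedgehog A') F G \<and> F ` spine = spine)"
  using assms perm_equiv_if_homeomorphic_hedgehogs homeomorphic_hedgehogs_if_perm_equiv
  by (metis KQ_def mem_Collect_eq)

section \<open>Borel measurability\<close>

lemma generate_topology_on_local_subbasis: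
  assumes "generate_topology_on \<S> W" "x \<in> W"
    and local: "\<And>S x. S \<in> \<S> \<Longrightarrow> x \<in> S \<Longrightarrow> \<exists>S'\<in>\<S>'. x \<in> S' \<and> S' \<subseteq> S"
  shows "\<exists>F. finite F \<and> F \<subseteq> \<S>' \<and> x \<in> \<Inter>F \<and> \<Inter>F \<subseteq> W"
  using assms(1,2)
proof (induction arbitrary: x rule: generate_topology_on.induct)
  case (Int a b)
  then obtain F1 F2 where F1: "finite F1" "F1 \<subseteq> \<S>'" "x \<in> \<Inter>F1" "\<Inter>F1 \<subseteq> a"
    and F2: "finite F2" "F2 \<subseteq> \<S>'" "x \<in> \<Inter>F2" "\<Inter>F2 \<subseteq> b"
    by (meson IntE)
  have "\<Inter>(F1 \<union> F2) \<subseteq> a \<inter> b" "x \<in> \<Inter>(F1 \<union> F2)"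
    using F1(3,4) F2(3,4) by blast+
  moreover have "finite (F1 \<union> F2)" "F1 \<union> F2 \<subseteq> \<S>'"
    using F1(1,2) F2(1,2) by simp_all
  ultimately show ?case by blast
next
  case (UN K)
  then obtain k where k: "k \<in> K" "x \<in> k" by blast
  from UN.IH[OF k] obtain F where "finite F" "F \<subseteq> \<S>'" "x \<in> \<Inter>F" "\<Inter>F \<subseteq> k"
    by blast
  moreover have "\<Inter>F \<subseteq> \<Union>K"
    using k(1) \<open>\<Inter>F \<subseteq> k\<close> by blast
  ultimately show ?case
    by (intro exI[of _ F] conjI) assumption+
next
  case (Basis s)
  then obtain S' where "S' \<in> \<S>'" "x \<in> S'" "S' \<subseteq> s"
    using local by blast
  then show ?case
    by (intro exI[of _ "{S'}"]) auto
qed simp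

text \<open>Every open set is a countable union of finite intersections of members of
  \<^term>\<open>\<S>'\<close>, so it suffices to test preimages of these.\<close>
lemma measurable_borel_of_top_generatedI:
  assumes "countable \<S>'" and preimage: "\<And>S. S \<in> \<S>' \<Longrightarrow> f -` S \<inter> space M \<in> sets M"
    and local: "\<And>S x. S \<in> \<S> \<Longrightarrow> x \<in> S \<Longrightarrow> \<exists>S'\<in>\<S>'. x \<in> S' \<and> S' \<subseteq> S"
    and f: "f \<in> space M \<rightarrow> \<Union>\<S>"
  shows "f \<in> measurable M (borel_of_top (topology_generated_by \<S>))"
proof -
  have basic: "f -` \<Inter>F \<inter> space M \<in> sets M" if "finite F" "F \<subseteq> \<S>'" for F
    using that
  proof (induction F rule: finite_induct)
    case (insert S F)
    have "f -` \<Inter>(insert S F) \<inter> space M = (f -` S \<inter> space M) \<inter> (f -` \<Inter>F \<inter> space M)"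
      by auto
    then show ?case using insert preimage by simp
  qed simp
  show ?thesis
    unfolding borel_of_top_def topology_generated_by_topspace
  proof (rule measurable_measure_of)
    show "{U. openin (topology_generated_by \<S>) U} \<subseteq> Pow (\<Union>\<S>)"
      using openin_subset by fastforce
    show "f \<in> space M \<rightarrow> \<Union>\<S>" by (rule f)
    fix W assume "W \<in> {U. openin (topology_generated_by \<S>) U}"
    then have W: "generate_topology_on \<S> W"
      by (simp add: openin_topology_generated_by_iff)
    define \<F> where "\<F> = {F. finite F \<and> F \<subseteq> \<S>' \<and> \<Inter>F \<subseteq> W}"
    have eq: "f -` W \<inter> space M = (\<Union>F\<in>\<F>. f -` \<Inter>F \<inter> space M)"
    proof
      show "f -` W \<inter> space M \<subseteq> (\<Union>F\<in>\<F>. f -` \<Inter>F \<inter> space M)"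
      proof
        fix x assume x: "x \<in> f -` W \<inter> space M"
        then have "f x \<in> W" by simp
        then obtain F where F: "finite F" "F \<subseteq> \<S>'" "f x \<in> \<Inter>F" "\<Inter>F \<subseteq> W"
          using generate_topology_on_local_subbasis[OF W _ local] by meson
        then have "F \<in> \<F>" by (simp add: \<F>_def)
        moreover have "x \<in> f -` \<Inter>F \<inter> space M" using F(3) x by simp
        ultimately show "x \<in> (\<Union>F\<in>\<F>. f -` \<Inter>F \<inter> space M)" by (rule UN_I)
      qed
      show "(\<Union>F\<in>\<F>. f -` \<Inter>F \<inter> space M) \<subseteq> f -` W \<inter> space M"
        by (auto simp: \<F>_def)
    qed
    have "countable \<F>"
      unfolding \<F>_def
      by (rule countable_subset[OF _ countable_Collect_finite_subset[OF \<open>countable \<S>'\<close>]]) auto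
    then have "(\<Union>F\<in>\<F>. f -` \<Inter>F \<inter> space M) \<in> sets M"
    proof (rule sets.countable_UN'')
      fix F assume "F \<in> \<F>"
      then show "f -` \<Inter>F \<inter> space M \<in> sets M"
        by (intro basic) (simp_all add: \<F>_def)
    qed
    then show "f -` W \<inter> space M \<in> sets M" by (simp only: eq)
  qed
qed

definition KQ_within :: "(nat \<Rightarrow> real) set \<Rightarrow> (nat \<Rightarrow> real) set set" where
  "KQ_within U = {K \<in> KQ. K \<subseteq> U}"

definition KQ_hitting :: "(nat \<Rightarrow> real) set \<Rightarrow> (nat \<Rightarrow> real) set set" where
  "KQ_hitting U = {K \<in> KQ. K \<inter> U \<noteq> {}}"

definition vietoris_subbasis :: "(nat \<Rightarrow> real) set set set" where
  "vietoris_subbasis = {KQ_within U | U. open U} \<union> {KQ_hitting U | U. open U}"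

lemma vietoris_KQ_eq: "vietoris_KQ = topology_generated_by vietoris_subbasis"
  unfolding vietoris_KQ_def vietoris_subbasis_def KQ_within_def KQ_hitting_def ..

lemma Union_vietoris_subbasis: "\<Union>vietoris_subbasis = KQ"
  by (auto simp: vietoris_subbasis_def KQ_within_def KQ_hitting_def)

lemma KQ_borel_eq: "KQ_borel = borel_of_top (topology_generated_by vietoris_subbasis)"
  by (simp add: KQ_borel_def vietoris_KQ_eq)

lemma space_KQ_borel: "space KQ_borel = KQ"
  by (simp add: KQ_borel_eq borel_of_top_def Union_vietoris_subbasis space_measure_of_conv)

lemma vietoris_subbasis_in_sets: "S \<in> vietoris_subbasis \<Longrightarrow> S \<in> sets KQ_borel"
proof -
  assume "S \<in> vietoris_subbasis"
  then have "openin (topology_generated_by vietoris_subbasis) S"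
    by (simp add: openin_topology_generated_by_iff generate_topology_on.Basis)
  moreover have "{U. openin (topology_generated_by vietoris_subbasis) U} \<subseteq> Pow KQ"
    using openin_subset Union_vietoris_subbasis by fastforce
  ultimately show ?thesis
    by (simp add: KQ_borel_eq borel_of_top_def Union_vietoris_subbasis sets_measure_of)
qed

lemma space_KQ_seq_borel: "space KQ_seq_borel = {A. \<forall>n. A n \<in> KQ}"
  by (auto simp: KQ_seq_borel_def space_PiM space_KQ_borel PiE_def extensional_def)

lemma KQ_seq_borel_component_preimage:
  "S \<in> sets KQ_borel \<Longrightarrow> (\<lambda>A. A n) -` S \<inter> space KQ_seq_borel \<in> sets KQ_seq_borel"
  unfolding KQ_seq_borel_def
  by (rule measurable_sets[OF measurable_component_singleton]) auto

text \<open>For \<^term>\<open>KQ_within U\<close>, compactness of \<^term>\<open>K\<close> lets \<^term>\<open>U\<close> shrink to a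
  finite union of basic open sets.\<close>
lemma vietoris_subbasis_local_countable:
  assumes "topological_basis B"
  defines "\<S>' \<equiv> (\<lambda>F. KQ_within (\<Union>F)) ` {F. finite F \<and> F \<subseteq> B} \<union> KQ_hitting ` B"
  assumes "S \<in> vietoris_subbasis" "K \<in> S"
  shows "\<exists>S'\<in>\<S>'. K \<in> S' \<and> S' \<subseteq> S"
proof -
  have open_B: "open b" if "b \<in> B" for b
    using assms(1) that topological_basis_open by blast
  from assms(3) consider U where "open U" "S = KQ_within U" | U where "open U" "S = KQ_hitting U"
    unfolding vietoris_subbasis_def by blast
  then show ?thesis
  proof cases
    case 1
    then have "compact K" "K \<subseteq> U" "K \<in> KQ"
      using assms(4) by (auto simp: KQ_within_def KQ_def)
    have cover: "K \<subseteq> \<Union>{b \<in> B. b \<subseteq> U}"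
    proof
      fix x assume "x \<in> K"
      then obtain b where "b \<in> B" "x \<in> b" "b \<subseteq> U"
        using topological_basisE[OF assms(1) \<open>open U\<close>] \<open>K \<subseteq> U\<close> by blast
      then show "x \<in> \<Union>{b \<in> B. b \<subseteq> U}" by blast
    qed
    obtain T where T: "T \<subseteq> {b \<in> B. b \<subseteq> U}" "finite T" "K \<subseteq> \<Union>T"
      by (rule compactE[OF \<open>compact K\<close> cover]) (use open_B in blast)+
    then have "\<Union>T \<subseteq> U" by blast
    then show ?thesis
      using 1 T \<open>K \<in> KQ\<close>
      by (intro bexI[of _ "KQ_within (\<Union>T)"]) (auto simp: \<S>'_def KQ_within_def)
  next
    case 2
    then obtain x where "x \<in> K" "x \<in> U" "K \<in> KQ"
      using assms(4) by (auto simp: KQ_hitting_def)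
    moreover obtain b where "b \<in> B" "x \<in> b" "b \<subseteq> U"
      using topological_basisE[OF assms(1) \<open>open U\<close> \<open>x \<in> U\<close>] by blast
    ultimately show ?thesis
      using 2 by (intro bexI[of _ "KQ_hitting b"]) (auto simp: \<S>'_def KQ_hitting_def)
  qed
qed

lemma measurable_KQ_borelI:
  assumes f: "f \<in> space M \<rightarrow> KQ"
    and within: "\<And>U. open U \<Longrightarrow> f -` KQ_within U \<inter> space M \<in> sets M"
    and hitting: "\<And>U. open U \<Longrightarrow> f -` KQ_hitting U \<inter> space M \<in> sets M"
  shows "f \<in> measurable M KQ_borel"
proof -
  obtain B :: "(nat \<Rightarrow> real) set set" where B: "countable B" "topological_basis B"
    using ex_countable_basis by blast
  define \<S>' where "\<S>' = (\<lambda>F. KQ_within (\<Union>F)) ` {F. finite F \<and> F \<subseteq> B} \<union> KQ_hitting ` B"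
  have "countable \<S>'"
    unfolding \<S>'_def using B(1)
    by (intro countable_Un countable_image countable_Collect_finite_subset)
  moreover have "f -` S \<inter> space M \<in> sets M" if "S \<in> \<S>'" for S
  proof -
    have "open b" if "b \<in> B" for b
      using B(2) that topological_basis_open by blast
    then show ?thesis
      using that unfolding \<S>'_def by (auto intro!: within hitting open_Union)
  qed
  ultimately show ?thesis
    unfolding KQ_borel_eq
  proof (rule measurable_borel_of_top_generatedI)
    show "\<exists>S'\<in>\<S>'. x \<in> S' \<and> S' \<subseteq> S" if "S \<in> vietoris_subbasis" "x \<in> S" for S x
      unfolding \<S>'_def using B(2) that by (rule vietoris_subbasis_local_countable)
    show "f \<in> space M \<rightarrow> \<Union>vietoris_subbasis"
      using f by (simp add: Union_vietoris_subbasis)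
  qed
qed

lemma hedgehog_mono: "(\<And>n. A n \<subseteq> B n) \<Longrightarrow> hedgehog A \<subseteq> hedgehog B"
  unfolding hedgehog_def by blast

lemma hedgehog_eq_Un:
  assumes "\<And>n. A n \<subseteq> hilbert_cube"
  shows "hedgehog A = hedgehog (\<lambda>_. {}) \<union> (\<Union>n. (\<lambda>(q, t). hair n t q) ` (A n \<times> {0..1}))"
proof
  show "hedgehog A \<subseteq> hedgehog (\<lambda>_. {}) \<union> (\<Union>n. (\<lambda>(q, t). hair n t q) ` (A n \<times> {0..1}))"
  proof
    fix x assume "x \<in> hedgehog A"
    then obtain n t q where x: "x = hair n t q" "t \<in> {0..1}" "q \<in> hilbert_cube"
      and "t = 0 \<or> t = 1 \<or> q \<in> A n"
      by (auto simp: mem_hedgehog_iff)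
    then consider "t = 0 \<or> t = 1" | "q \<in> A n" by blast
    then show "x \<in> hedgehog (\<lambda>_. {}) \<union> (\<Union>n. (\<lambda>(q, t). hair n t q) ` (A n \<times> {0..1}))"
    proof cases
      case 1
      then show ?thesis using x by (auto simp: hair_in_hedgehog_iff)
    next
      case 2
      then have "x \<in> (\<lambda>(q, t). hair n t q) ` (A n \<times> {0..1})"
        using x by force
      then show ?thesis by blast
    qed
  qed
  show "hedgehog (\<lambda>_. {}) \<union> (\<Union>n. (\<lambda>(q, t). hair n t q) ` (A n \<times> {0..1})) \<subseteq> hedgehog A"
  proof (intro Un_least UN_least)
    show "hedgehog (\<lambda>_. {}) \<subseteq> hedgehog A"
      by (rule hedgehog_mono) simp
    show "(\<lambda>(q, t). hair n t q) ` (A n \<times> {0..1}) \<subseteq> hedgehog A" for n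
      using assms[of n] by (auto simp: hair_in_hedgehog_iff)
  qed
qed

lemma hedgehog_preimage_KQ_within:
  assumes "open W"
  shows "hedgehog -` KQ_within W \<inter> space KQ_seq_borel \<in> sets KQ_seq_borel"
proof -
  define V where "V n = {q. \<forall>t\<in>{0..1}. hair n t q \<in> W}" for n
  have "open (V n)" for n
    unfolding V_def
    using open_Collect_ball_compact[OF compact_Icc continuous_on_hair \<open>open W\<close>] by simp
  then have V: "(\<lambda>A. A n) -` KQ_within (V n) \<inter> space KQ_seq_borel \<in> sets KQ_seq_borel" for n
    by (intro KQ_seq_borel_component_preimage vietoris_subbasis_in_sets)
      (auto simp: vietoris_subbasis_def)
  have "hedgehog -` KQ_within W \<inter> space KQ_seq_borel =
      (if hedgehog (\<lambda>_. {}) \<subseteq> W then (\<Inter>n. (\<lambda>A. A n) -` KQ_within (V n) \<inter> space KQ_seq_borel) else {})"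
  proof (intro set_eqI)
    fix A
    show "A \<in> hedgehog -` KQ_within W \<inter> space KQ_seq_borel \<longleftrightarrow>
      A \<in> (if hedgehog (\<lambda>_. {}) \<subseteq> W then (\<Inter>n. (\<lambda>A. A n) -` KQ_within (V n) \<inter> space KQ_seq_borel) else {})"
    proof (cases "A \<in> space KQ_seq_borel")
      case True
      then have KQ: "\<And>n. A n \<in> KQ" by (simp add: space_KQ_seq_borel)
      then have "\<And>n. A n \<subseteq> hilbert_cube" "\<And>n. closed (A n)"
        by (auto simp: KQ_def compact_imp_closed)
      then have "hedgehog A \<subseteq> W \<longleftrightarrow>
          hedgehog (\<lambda>_. {}) \<subseteq> W \<and> (\<forall>n. (\<lambda>(q, t). hair n t q) ` (A n \<times> {0..1}) \<subseteq> W)"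
        by (subst hedgehog_eq_Un) (simp_all add: UN_subset_iff)
      moreover have "(\<lambda>(q, t). hair n t q) ` (A n \<times> {0..1}) \<subseteq> W \<longleftrightarrow> A n \<subseteq> V n" for n
        by (auto simp: V_def)
      ultimately have "hedgehog A \<subseteq> W \<longleftrightarrow> hedgehog (\<lambda>_. {}) \<subseteq> W \<and> (\<forall>n. A n \<subseteq> V n)"
        by simp
      then show ?thesis
        using True KQ hedgehog_in_KQ \<open>\<And>n. closed (A n)\<close> by (auto simp: KQ_within_def)
    qed auto
  qed
  moreover have "(\<Inter>n. (\<lambda>A. A n) -` KQ_within (V n) \<inter> space KQ_seq_borel) \<in> sets KQ_seq_borel"
    using V by (intro sets.countable_INT) auto
  ultimately show ?thesis by simp
qed

lemma hedgehog_preimage_KQ_hitting: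
  assumes "open W"
  shows "hedgehog -` KQ_hitting W \<inter> space KQ_seq_borel \<in> sets KQ_seq_borel"
proof -
  define V where "V n = {q. \<exists>t\<in>{0..1}. hair n t q \<in> W}" for n
  have "V n = (\<Union>t\<in>{0..1}. hair n t -` W)" for n
    by (auto simp: V_def)
  then have "open (V n)" for n
    using open_vimage[OF \<open>open W\<close> continuous_on_hair_base] by auto
  then have V: "(\<lambda>A. A n) -` KQ_hitting (V n) \<inter> space KQ_seq_borel \<in> sets KQ_seq_borel" for n
    by (intro KQ_seq_borel_component_preimage vietoris_subbasis_in_sets)
      (auto simp: vietoris_subbasis_def)
  have "hedgehog -` KQ_hitting W \<inter> space KQ_seq_borel =
      (if hedgehog (\<lambda>_. {}) \<inter> W \<noteq> {} then space KQ_seq_borel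
       else (\<Union>n. (\<lambda>A. A n) -` KQ_hitting (V n) \<inter> space KQ_seq_borel))"
  proof (intro set_eqI)
    fix A
    show "A \<in> hedgehog -` KQ_hitting W \<inter> space KQ_seq_borel \<longleftrightarrow>
      A \<in> (if hedgehog (\<lambda>_. {}) \<inter> W \<noteq> {} then space KQ_seq_borel
       else (\<Union>n. (\<lambda>A. A n) -` KQ_hitting (V n) \<inter> space KQ_seq_borel))"
    proof (cases "A \<in> space KQ_seq_borel")
      case True
      then have KQ: "\<And>n. A n \<in> KQ" by (simp add: space_KQ_seq_borel)
      then have "\<And>n. A n \<subseteq> hilbert_cube" "\<And>n. closed (A n)"
        by (auto simp: KQ_def compact_imp_closed)
      then have "hedgehog A \<inter> W \<noteq> {} \<longleftrightarrow>
          hedgehog (\<lambda>_. {}) \<inter> W \<noteq> {} \<or> (\<exists>n. (\<lambda>(q, t). hair n t q) ` (A n \<times> {0..1}) \<inter> W \<noteq> {})"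
        by (subst hedgehog_eq_Un) blast+
      moreover have "(\<lambda>(q, t). hair n t q) ` (A n \<times> {0..1}) \<inter> W \<noteq> {} \<longleftrightarrow> A n \<inter> V n \<noteq> {}" for n
        by (auto simp: V_def)
      ultimately have "hedgehog A \<inter> W \<noteq> {} \<longleftrightarrow> hedgehog (\<lambda>_. {}) \<inter> W \<noteq> {} \<or> (\<exists>n. A n \<inter> V n \<noteq> {})"
        by simp
      then show ?thesis
        using True KQ hedgehog_in_KQ \<open>\<And>n. closed (A n)\<close> by (auto simp: KQ_hitting_def)
    qed auto
  qed
  moreover have "(\<Union>n. (\<lambda>A. A n) -` KQ_hitting (V n) \<inter> space KQ_seq_borel) \<in> sets KQ_seq_borel"
    using V by (intro sets.countable_UN) auto
  ultimately show ?thesis by simp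
qed

lemma measurable_hedgehog: "hedgehog \<in> measurable KQ_seq_borel KQ_borel"
proof (rule measurable_KQ_borelI)
  show "hedgehog \<in> space KQ_seq_borel \<rightarrow> KQ"
  proof
    fix A assume "A \<in> space KQ_seq_borel"
    then have "\<And>n. closed (A n)"
      by (auto simp: space_KQ_seq_borel KQ_def compact_imp_closed)
    then show "hedgehog A \<in> KQ" by (rule hedgehog_in_KQ)
  qed
qed (auto intro: hedgehog_preimage_KQ_within hedgehog_preimage_KQ_hitting)

theorem proposition5:
  shows "borel_reducible KQ_seq_borel perm_equiv triples_borel equiv_11"
proof -
  define reduction where "reduction A = (hedgehog A, hedgehog A, spine)" for A
  have "reduction \<in> measurable KQ_seq_borel triples_borel"
    unfolding triples_borel_def
  proof (rule measurable_restrict_space2)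
    show "reduction \<in> space KQ_seq_borel \<rightarrow> triples"
      using hedgehog_in_KQ spine_in_KQ perfect_hedgehog spine_subset_hedgehog
      by (auto simp: reduction_def triples_def space_KQ_seq_borel KQ_def compact_imp_closed)
    show "reduction \<in> measurable KQ_seq_borel (KQ_borel \<Otimes>\<^sub>M (KQ_borel \<Otimes>\<^sub>M KQ_borel))"
      unfolding reduction_def
      by (intro measurable_Pair measurable_hedgehog measurable_const) (simp add: space_KQ_borel spine_in_KQ)
  qed
  moreover have "perm_equiv A A' \<longleftrightarrow> equiv_11 (reduction A) (reduction A')"
    if "A \<in> space KQ_seq_borel" "A' \<in> space KQ_seq_borel" for A A'
  proof -
    have "equiv_11 (reduction A) (reduction A') \<longleftrightarrow>
        (\<exists>F G. homeomorphism (hedgehog A) (hedgehog A') F G \<and> F ` spine = spine)"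
      unfolding equiv_11_def reduction_def by auto (metis homeomorphism_image1)
    then show ?thesis
      using that perm_equiv_iff_homeomorphic_hedgehogs[of A A'] by (simp add: space_KQ_seq_borel)
  qed
  ultimately show ?thesis
    unfolding borel_reducible_def by blast
qed

end
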